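(* Let $n\ge1$ be an integer with binary expansion $n=\sum_{k=0}^{K}2^{L_k}$, $L_0>L_1>\dots>L_K\ge0$. Define the probability distribution on $\{L_0,\dots,L_K\}$ by $\Pr(L=L_k)=2^{L_k}/n$. Then its Shannon entropy satisfies $H(L)\le 2$ bits.
   Context: Entropy is measured in bits ($\log_2$). *)

theory Defs
  imports Main Complex_Main
begin

definition binary_positions :: "nat \<Rightarrow> nat set" where
  "binary_positions n = {k. bit n k}"

definition shannon_entropy :: "'a set \<Rightarrow> ('a \<Rightarrow> real) \<Rightarrow> real" where
  "shannon_entropy S p = - (\<Sum>x\<in>S. p x * log 2 (p x))"

definition bit_dist :: "nat \<Rightarrow> nat \<Rightarrow> real" where
  "bit_dist n k = 2 ^ k / real n"

end

theory Submission
  imports Defs "HOL-Library.Discrete_Functions"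
begin

(*
  Write S for the set of 1-bit positions of n, so that n = \<Sum>k\<in>S. 2^k, and put
  M(n) = \<Sum>k\<in>S. k * 2^k.  Since Pr(L = k) = 2^k / n has log-probability k - log2 n,
  the entropy is exactly  H(L) = log2 n - M(n) / n.

  The set S of n is that of n div 2 shifted up by one, plus 0 if n is odd.  Hence
  M(n) = 2 M(n div 2) + 2 (n div 2), and an induction along halving (with
  m = floor_log n, i.e. 2^m \<le> n < 2^(m+1)) gives  (n+1)(m+1) \<le> M(n) + 2n.
  Combined with log2 n < m + 1 this yields H(L) < (m+1) - (m+1) + 2 = 2.
*)

lemma binary_positions_half:
  "binary_positions n = (if odd n then {0} else {}) \<union> Suc ` binary_positions (n div 2)"
  unfolding binary_positions_def
proof (rule set_eqI)
  show "k \<in> {k. bit n k} \<longleftrightarrow> k \<in> (if odd n then {0} else {}) \<union> Suc ` {k. bit (n div 2) k}" for k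
    by (cases k) (auto simp: bit_Suc bit_0)
qed

text \<open>A set bit at position k forces 2^k \<le> n, so only finitely many bits are set.\<close>
lemma finite_binary_positions: "finite (binary_positions n)"
proof (rule finite_subset)
  show "binary_positions n \<subseteq> {..<n}"
  proof
    fix k assume "k \<in> binary_positions n"
    then have "odd (n div 2 ^ k)"
      by (simp add: binary_positions_def bit_iff_odd)
    then have "2 ^ k \<le> n"
      by (metis div_eq_0_iff even_zero not_le power_not_zero zero_neq_numeral)
    then have "k < n"
      using less_exp[of k] by linarith
    then show "k \<in> {..<n}"
      by simp
  qed
qed simp

lemma sum_binary_positions_half:
  fixes f :: "nat \<Rightarrow> 'a::comm_monoid_add"
  shows "(\<Sum>k\<in>binary_positions n. f k)
           = (if odd n then f 0 else 0) + (\<Sum>k\<in>binary_positions (n div 2). f (Suc k))"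
proof -
  have disjoint: "(if odd n then {0} else {}) \<inter> Suc ` binary_positions (n div 2) = {}"
    by auto
  have "(\<Sum>k\<in>binary_positions n. f k)
          = (\<Sum>k\<in>(if odd n then {0} else {}). f k) + (\<Sum>k\<in>Suc ` binary_positions (n div 2). f k)"
    by (subst binary_positions_half, rule sum.union_disjoint)
       (use finite_binary_positions disjoint in auto)
  also have "(\<Sum>k\<in>Suc ` binary_positions (n div 2). f k) = (\<Sum>k\<in>binary_positions (n div 2). f (Suc k))"
    by (simp add: sum.reindex)
  finally show ?thesis by simp
qed

lemma sum_pow2_binary_positions: "(\<Sum>k\<in>binary_positions n. (2::nat) ^ k) = n"
proof (induction n rule: less_induct)
  case (less n)
  show ?case
  proof (cases "n = 0")
    case True
    then show ?thesis by (simp add: binary_positions_def)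
  next
    case False
    then have "(\<Sum>k\<in>binary_positions (n div 2). (2::nat) ^ k) = n div 2"
      by (intro less.IH) simp
    then show ?thesis
      by (simp add: sum_binary_positions_half[of _ n] sum_distrib_left[symmetric])
  qed
qed

definition position_moment :: "nat \<Rightarrow> nat" where
  "position_moment n = (\<Sum>k\<in>binary_positions n. 2 ^ k * k)"

text \<open>Halving n shifts every 1-bit down by one and drops bit 0, which has weight 0.\<close>
lemma position_moment_half:
  "position_moment n = 2 * position_moment (n div 2) + 2 * (n div 2)"
proof -
  have "position_moment n = (\<Sum>k\<in>binary_positions (n div 2). 2 * (2 ^ k * k) + 2 * 2 ^ k)"
    unfolding position_moment_def by (simp add: sum_binary_positions_half[of _ n] algebra_simps)
  then show ?thesis
    by (simp add: sum.distrib sum_distrib_left[symmetric] sum_pow2_binary_positions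
        position_moment_def)
qed

text \<open>The key estimate: with m = floor_log n (so 2^m \<le> n < 2^(m+1)), the mass 2^k/n is
  concentrated near the top bit m, quantitatively (n+1)(m+1) \<le> M(n) + 2n.\<close>
lemma position_moment_lower_bound:
  assumes "n > 0"
  shows "(n + 1) * (floor_log n + 1) \<le> position_moment n + 2 * n"
  using assms
proof (induction n rule: floor_log_induct)
  case one
  then show ?case by simp
next
  case (double n)
  define k where "k = n div 2"
  have IH: "(k + 1) * (floor_log k + 1) \<le> position_moment k + 2 * k"
    using double.IH by (simp add: k_def)
  have log: "floor_log n = Suc (floor_log k)"
    unfolding k_def by (rule floor_log_rec[OF double.hyps])
  have moment: "position_moment n = 2 * position_moment k + 2 * k"
    unfolding k_def by (rule position_moment_half)
  have "n = 2 * k \<or> n = 2 * k + 1"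
    by (auto simp: k_def)
  then show ?case
    using IH log moment by (auto simp: algebra_simps)
qed

lemma log2_bit_dist:
  assumes "n > 0"
  shows "log 2 (bit_dist n k) = real k - log 2 (real n)"
  using assms by (simp add: bit_dist_def log_divide log_nat_power)

lemma entropy_binary_positions:
  assumes "n > 0"
  shows "shannon_entropy (binary_positions n) (bit_dist n)
           = log 2 (real n) - real (position_moment n) / real n"
proof -
  let ?S = "binary_positions n"
  have mass: "(\<Sum>k\<in>?S. (2::real) ^ k) = real n"
    using arg_cong[OF sum_pow2_binary_positions[of n], of real] by simp
  have "shannon_entropy ?S (bit_dist n) = - (\<Sum>k\<in>?S. bit_dist n k * (real k - log 2 (real n)))"
    unfolding shannon_entropy_def by (simp add: log2_bit_dist assms)
  also have "\<dots> = (\<Sum>k\<in>?S. 2 ^ k * log 2 (real n) - 2 ^ k * real k) / real n"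
    by (simp add: bit_dist_def sum_divide_distrib diff_divide_distrib sum_negf[symmetric]
        algebra_simps)
  also have "\<dots> = (log 2 (real n) * real n - real (position_moment n)) / real n"
    by (simp add: sum_subtractf sum_distrib_right[symmetric] mass position_moment_def mult.commute)
  also have "\<dots> = log 2 (real n) - real (position_moment n) / real n"
    using assms by (simp add: field_simps)
  finally show ?thesis .
qed

lemma log2_less_floor_log:
  assumes "n > 0"
  shows "log 2 (real n) < real (floor_log n) + 1"
proof -
  have "real n < real (2 ^ (floor_log n + 1))"
    using floor_log_exp2_gt[of n] by (simp only: of_nat_less_iff) simp
  then have "real n < 2 ^ (floor_log n + 1)"
    by simp
  then have "log 2 (real n) < log 2 (2 ^ (floor_log n + 1))"
    using assms by (intro log_less) auto
  then show ?thesis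
    by (simp add: log_nat_power del: power_Suc)
qed

theorem mainTheorem3:
  fixes n :: nat
  assumes "n \<ge> 1"
  shows "shannon_entropy (binary_positions n) (bit_dist n) \<le> 2"
proof -
  let ?m = "real (floor_log n)" and ?M = "real (position_moment n)"
  have pos: "n > 0" using assms by simp
  have "n * (floor_log n + 1) \<le> position_moment n + 2 * n"
    using position_moment_lower_bound[OF pos] by (simp add: algebra_simps)
  then have "real (n * (floor_log n + 1)) \<le> real (position_moment n + 2 * n)"
    by (simp only: of_nat_le_iff)
  then have "real n * (?m + 1) \<le> ?M + 2 * real n"
    by (simp add: algebra_simps)
  then have "?m + 1 - 2 \<le> ?M / real n"
    using pos by (simp add: field_simps)
  then show ?thesis
    using entropy_binary_positions[OF pos] log2_less_floor_log[OF pos] by linarith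
qed

end
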